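(* If $F$ is a balanced wiring, then $\mathrm{Comp}(F)$ is a separating space for $F$: (i) for every $\mathbf u\in\mathrm{Comp}(F)$, $F\mathbf u\subseteq\mathrm{Comp}(F)$; and (ii) for every $n$, if $F^n\mathbf u=0$ for all $\mathbf u\in\mathrm{Comp}(F)$ then $F^n=0$.
   Context: Terms: first-order terms built from an infinite set of variables, a binary function symbol $\bullet$ written infix, infinitely many constant symbols including a distinguished constant $\star$, and for each $n\ge1$ at least one $n$-ary function symbol. $\mathrm{var}(t)$ is the set of variables of $t$; $t$ is closed if $\mathrm{var}(t)=\emptyset$. The height $h(t)$ is the maximal distance from the root to a node in the tree of $t$; the height of an occurrence of a variable in $t$ is its distance from the root. A flow is a pair of terms written $t\leftarrow u$ with $\mathrm{var}(t)\subseteq\mathrm{var}(u)$, considered up to renaming. A fact is a flow $t\leftarrow\star$ (so $t$ is closed). The product of flows $u\leftarrow v$ and $t\leftarrow w$ (representatives chosen with disjoint variable sets) is defined iff $v$ and $t$ are unifiable, and then equals $u\theta\leftarrow w\theta$ with $\theta$ a most general unifier of $v,t$. A wiring is a finite set of flows, written as a formal sum, with $0$ the empty wiring; product $FG=\{fg: f\in F,g\in G, fg\text{ defined}\}$, $F^n$ the $n$-fold product. For a fact $\mathbf u$, $F\mathbf u$ denotes $F\{\mathbf u\}$ (a set of facts). A flow $t\leftarrow u$ is balanced if for every variable $x$, all occurrences of $x$ in $t$ and in $u$ have the same height; a wiring is balanced if all its flows are. The height of a flow $t\leftarrow u$ is $\max\{h(t),h(u)\}$; the height $h(F)$ of a wiring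 is the maximal height of its flows. For a balanced wiring $F$, its computation space $\mathrm{Comp}(F)$ is the set of facts $t\leftarrow\star$ with $h(t)\le h(F)$ and $t$ built using only symbols occurring in $F$ and the constant $\star$. A separating space for a wiring $F$ is a set of facts $\mathbf S$ such that $F\mathbf u\subseteq\mathbf S$ for all $\mathbf u\in\mathbf S$, and such that, for every $n$, $F^n\mathbf u=0$ for all $\mathbf u\in\mathbf S$ implies $F^n=0$. *)

theory Defs
  imports Main
begin

text \<open>A function symbol is a pair of a name and an arity; the arity of an
  application is the length of its argument list.  Thus (Star,0) is the distinguished
  constant, (Bullet,2) is the binary symbol, (Sym k, 0) are infinitely many constants,
  and (Sym k, n) are n-ary symbols for every n.\<close>

datatype sym = Star | Bullet | Sym nat

datatype trm = Var nat | App sym "trm list"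

definition star :: trm where "star = App Star []"

fun vars :: "trm \<Rightarrow> nat set" where
  "vars (Var x) = {x}"
| "vars (App f ts) = (\<Union>t\<in>set ts. vars t)"

fun subst :: "(nat \<Rightarrow> trm) \<Rightarrow> trm \<Rightarrow> trm" where
  "subst \<sigma> (Var x) = \<sigma> x"
| "subst \<sigma> (App f ts) = App f (map (subst \<sigma>) ts)"

fun syms :: "trm \<Rightarrow> (sym \<times> nat) set" where
  "syms (Var x) = {}"
| "syms (App f ts) = insert (f, length ts) (\<Union>t\<in>set ts. syms t)"

fun height :: "trm \<Rightarrow> nat" where
  "height (Var x) = 0"
| "height (App f ts) = (if ts = [] then 0 else Suc (Max (set (map height ts))))"

fun vdepths :: "trm \<Rightarrow> nat \<Rightarrow> nat set" where
  "vdepths (Var y) x = (if x = y then {0} else {})"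
| "vdepths (App f ts) x = (\<Union>t\<in>set ts. Suc ` vdepths t x)"

definition is_mgu :: "(nat \<Rightarrow> trm) \<Rightarrow> trm \<Rightarrow> trm \<Rightarrow> bool" where
  "is_mgu \<sigma> s t \<longleftrightarrow> subst \<sigma> s = subst \<sigma> t \<and>
     (\<forall>\<tau>. subst \<tau> s = subst \<tau> t \<longrightarrow> (\<exists>\<delta>. \<forall>x. \<tau> x = subst \<delta> (\<sigma> x)))"

definition ren :: "(nat \<Rightarrow> nat) \<Rightarrow> trm \<Rightarrow> trm" where
  "ren \<rho> t = subst (Var \<circ> \<rho>) t"

text \<open>A flow  t \<leftarrow> u  is represented by the pair (t,u); flows are considered up to
  renaming, so a (finite) wiring is given by a finite set of representatives.
  The product of wirings collects the products of all pairs of flows, computed for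
  every choice of representatives with disjoint variables and every mgu; hence it is a
  (possibly infinite) set of representatives of the product wiring, and it is empty iff
  the product wiring is 0.\<close>

definition is_flow :: "trm \<times> trm \<Rightarrow> bool" where
  "is_flow f \<longleftrightarrow> vars (fst f) \<subseteq> vars (snd f)"

definition wiring :: "(trm \<times> trm) set \<Rightarrow> bool" where
  "wiring F \<longleftrightarrow> finite F \<and> (\<forall>f\<in>F. is_flow f)"

definition is_fact :: "trm \<times> trm \<Rightarrow> bool" where
  "is_fact f \<longleftrightarrow> snd f = star \<and> vars (fst f) = {}"

definition wprod :: "(trm \<times> trm) set \<Rightarrow> (trm \<times> trm) set \<Rightarrow> (trm \<times> trm) set" where
  "wprod F G = {(subst \<sigma> u, subst \<sigma> w) | u v t w \<sigma>.
      (u, v) \<in> F \<and>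
      (\<exists>\<rho> t0 w0. (t0, w0) \<in> G \<and> bij \<rho> \<and> t = ren \<rho> t0 \<and> w = ren \<rho> w0) \<and>
      (vars t \<union> vars w) \<inter> (vars u \<union> vars v) = {} \<and>
      is_mgu \<sigma> v t}"

fun wpow :: "(trm \<times> trm) set \<Rightarrow> nat \<Rightarrow> (trm \<times> trm) set" where
  "wpow F 0 = {(Var 0, Var 0)}"
| "wpow F (Suc n) = wprod F (wpow F n)"

definition wapp :: "(trm \<times> trm) set \<Rightarrow> trm \<times> trm \<Rightarrow> (trm \<times> trm) set" where
  "wapp F u = wprod F {u}"

definition balanced_flow :: "trm \<times> trm \<Rightarrow> bool" where
  "balanced_flow f \<longleftrightarrow>
     (\<forall>x. \<forall>d\<in>vdepths (fst f) x \<union> vdepths (snd f) x.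
            \<forall>d'\<in>vdepths (fst f) x \<union> vdepths (snd f) x. d = d')"

definition balanced :: "(trm \<times> trm) set \<Rightarrow> bool" where
  "balanced F \<longleftrightarrow> (\<forall>f\<in>F. balanced_flow f)"

definition flow_height :: "trm \<times> trm \<Rightarrow> nat" where
  "flow_height f = max (height (fst f)) (height (snd f))"

definition wheight :: "(trm \<times> trm) set \<Rightarrow> nat" where
  "wheight F = Max (insert 0 (flow_height ` F))"

definition wsyms :: "(trm \<times> trm) set \<Rightarrow> (sym \<times> nat) set" where
  "wsyms F = (\<Union>f\<in>F. syms (fst f) \<union> syms (snd f))"

definition Comp :: "(trm \<times> trm) set \<Rightarrow> (trm \<times> trm) set" where
  "Comp F = {(t, star) | t. vars t = {} \<and> height t \<le> wheight F \<and>
                           syms t \<subseteq> wsyms F \<union> {(Star, 0)}}"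

definition separating :: "(trm \<times> trm) set \<Rightarrow> (trm \<times> trm) set \<Rightarrow> bool" where
  "separating S F \<longleftrightarrow> (\<forall>u\<in>S. is_fact u) \<and>
     (\<forall>u\<in>S. wapp F u \<subseteq> S) \<and>
     (\<forall>n. (\<forall>u\<in>S. wapp (wpow F n) u = {}) \<longrightarrow> wpow F n = {})"

end

theory Submission
  imports Defs
begin

text \<open>
  Let H = h(F) and let S be the symbols of F together with star.  A term is
  layered at depth d under a level map L if it fits below height H, uses only symbols of S,
  and every occurrence of a variable x sits at absolute depth L x; a flow is layered if one
  level map serves both sides.  Flows of a balanced wiring are layered.

  The core result: if v and t are layered under a common level map and \<sigma> is a most general
  unifier of them, then each \<sigma> x is layered at depth L x.  Height, symbols and levels are
  each controlled by building a second unifier (truncate at height H, replace foreign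
  symbols by star, plug a tall tower into one variable) which must factor through \<sigma>.

  Hence all flows of all powers F^n are layered.  Closure of Comp(F) follows since F applied
  to a layered closed fact gives layered closed facts; separation follows since the input
  side of a flow of F^n, grounded with star, is a fact of Comp(F) on which that flow fires.
\<close>

lemma subst_comp: "subst \<delta> (subst \<sigma> s) = subst (subst \<delta> \<circ> \<sigma>) s"
  by (induction s) auto

lemma subst_cong: "(\<forall>x\<in>vars s. \<sigma> x = \<tau> x) \<Longrightarrow> subst \<sigma> s = subst \<tau> s"
  by (induction s) auto

lemma subst_eq_var: "subst \<sigma> s = subst \<tau> s \<Longrightarrow> x \<in> vars s \<Longrightarrow> \<sigma> x = \<tau> x"
  by (induction s) auto

lemma vars_subst: "vars (subst \<sigma> s) = (\<Union>x\<in>vars s. vars (\<sigma> x))"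
  by (induction s) auto

lemma subst_Var: "subst Var s = s"
  by (induction s) (auto simp: map_idI)

lemma subst_closed: "vars s = {} \<Longrightarrow> subst \<sigma> s = s"
  using subst_cong[of s \<sigma> Var] subst_Var by auto

lemma vars_star [simp]: "vars star = {}"
  by (simp add: star_def)

lemma subst_star [simp]: "subst \<sigma> star = star"
  by (simp add: star_def)

lemma ren_closed: "vars s = {} \<Longrightarrow> ren \<rho> s = s"
  by (simp add: ren_def subst_closed)

lemma height_mem: "t \<in> set ts \<Longrightarrow> height t < height (App f ts)"
proof -
  assume t: "t \<in> set ts"
  then have ne: "ts \<noteq> []" by auto
  have "height t \<le> Max (set (map height ts))" by (rule Max_ge) (use t in auto)
  then show ?thesis using ne by simp
qed

lemma height_App_le:
  assumes "ts \<noteq> []" and "\<forall>t\<in>set ts. height t + Suc d \<le> H"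
  shows "height (App f ts) + d \<le> H"
proof -
  obtain t where "t \<in> set ts" using assms(1) by (cases ts) auto
  then have "Suc d \<le> H" using assms(2) by auto
  moreover have "Max (set (map height ts)) \<le> H - Suc d"
    using assms by (subst Max_le_iff) auto
  moreover have "height (App f ts) = Suc (Max (set (map height ts)))" using assms(1) by simp
  ultimately show ?thesis by linarith
qed

lemma vdepths_le: "e \<in> vdepths s x \<Longrightarrow> e \<le> height s"
proof (induction s arbitrary: e)
  case (Var y) then show ?case by (auto split: if_splits)
next
  case (App f ts)
  then obtain t e1 where t: "t \<in> set ts" "e1 \<in> vdepths t x" "e = Suc e1" by auto
  then show ?case using App.IH[OF t(1) t(2)] height_mem[OF t(1), of f] by simp
qed

lemma vars_vdepths: "x \<in> vars s \<Longrightarrow> vdepths s x \<noteq> {}"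
  by (induction s) fastforce+

lemma vdepths_vars: "e \<in> vdepths s x \<Longrightarrow> x \<in> vars s"
  by (induction s arbitrary: e) (fastforce split: if_splits)+

lemma height_subst: "height s \<le> height (subst \<delta> s)"
proof (induction s)
  case (Var x) then show ?case by simp
next
  case (App f ts)
  show ?case
  proof (cases "ts = []")
    case True then show ?thesis by simp
  next
    case False
    have "\<forall>t\<in>set ts. height t + Suc 0 \<le> height (subst \<delta> (App f ts))"
      using App.IH height_mem[of _ "map (subst \<delta>) ts" f] by fastforce
    then show ?thesis using height_App_le[OF False, of 0] by simp
  qed
qed

lemma syms_subst: "syms s \<subseteq> syms (subst \<delta> s)"
  by (induction s) auto

lemma factor_height: "\<forall>x. \<tau> x = subst \<delta> (\<sigma> x) \<Longrightarrow> height (\<sigma> x) \<le> height (\<tau> x)"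
  by (metis height_subst)

lemma factor_syms: "\<forall>x. \<tau> x = subst \<delta> (\<sigma> x) \<Longrightarrow> syms (\<sigma> x) \<subseteq> syms (\<tau> x)"
  by (metis syms_subst)

lemma grounding_mgu:
  "is_mgu (\<lambda>x. if x \<in> vars b then star else Var x) b (subst (\<lambda>_. star) b)"
  (is "is_mgu ?\<sigma> b ?c")
  unfolding is_mgu_def
proof (intro conjI allI impI)
  have closed: "vars ?c = {}" unfolding vars_subst by simp
  have "subst ?\<sigma> b = ?c" by (rule subst_cong) auto
  then show "subst ?\<sigma> b = subst ?\<sigma> ?c" using subst_closed[OF closed] by simp
  fix \<tau> assume "subst \<tau> b = subst \<tau> ?c"
  then have "subst \<tau> b = subst (\<lambda>_. star) b" using subst_closed[OF closed] by simp
  then have "\<tau> x = star" if "x \<in> vars b" for x using subst_eq_var that by metis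
  then show "\<exists>\<delta>. \<forall>x. \<tau> x = subst \<delta> (?\<sigma> x)" by (intro exI[of _ \<tau>]) auto
qed

lemma wapp_member:
  assumes "(a, b) \<in> F" and "vars s = {}" and "is_mgu \<sigma> b s"
  shows "(subst \<sigma> a, star) \<in> wapp F (s, star)"
proof -
  have "(s, star) \<in> {(s, star)} \<and> bij id \<and> s = ren id s \<and> star = ren id star"
    using ren_closed[OF assms(2)] ren_closed[OF vars_star] by simp
  moreover have "(vars s \<union> vars star) \<inter> (vars a \<union> vars b) = {}" using assms(2) by simp
  ultimately have "(subst \<sigma> a, subst \<sigma> star) \<in> wprod F {(s, star)}"
    unfolding wprod_def mem_Collect_eq using assms(1,3) by blast
  then show ?thesis by (simp add: wapp_def)
qed

lemma wapp_mono: "F \<subseteq> G \<Longrightarrow> wapp F u \<subseteq> wapp G u"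
  unfolding wapp_def wprod_def by blast

section \<open>Layered terms\<close>

fun layered :: "nat \<Rightarrow> (sym \<times> nat) set \<Rightarrow> (nat \<Rightarrow> nat) \<Rightarrow> nat \<Rightarrow> trm \<Rightarrow> bool" where
  "layered H S L d (Var x) = (L x = d \<and> d \<le> H)"
| "layered H S L d (App f ts) =
     ((f, length ts) \<in> S \<and> d \<le> H \<and> (\<forall>t\<in>set ts. layered H S L (Suc d) t))"

lemma layered_iff:
  "layered H S L d s \<longleftrightarrow>
     height s + d \<le> H \<and> syms s \<subseteq> S \<and> (\<forall>x e. e \<in> vdepths s x \<longrightarrow> L x = d + e)"
proof (induction s arbitrary: d)
  case (Var x)
  then show ?case by auto
next
  case (App f ts)
  have args: "(\<forall>t\<in>set ts. layered H S L (Suc d) t) \<longleftrightarrow>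
      (\<forall>t\<in>set ts. height t + Suc d \<le> H) \<and> (\<forall>t\<in>set ts. syms t \<subseteq> S) \<and>
      (\<forall>t\<in>set ts. \<forall>x e. e \<in> vdepths t x \<longrightarrow> L x = Suc d + e)"
    using App.IH by blast
  have height: "height (App f ts) + d \<le> H \<longleftrightarrow> d \<le> H \<and> (\<forall>t\<in>set ts. height t + Suc d \<le> H)"
  proof (cases "ts = []")
    case False
    then show ?thesis using height_App_le[OF False, of d H f] height_mem[of _ ts f] by fastforce
  qed simp
  have depths: "(\<forall>x e. e \<in> vdepths (App f ts) x \<longrightarrow> L x = d + e) \<longleftrightarrow>
      (\<forall>t\<in>set ts. \<forall>x e. e \<in> vdepths t x \<longrightarrow> L x = Suc d + e)"
    by (auto; metis add_Suc_right image_eqI)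
  show ?case unfolding layered.simps args height depths by auto
qed

lemma layered_var_le: "layered H S L d s \<Longrightarrow> x \<in> vars s \<Longrightarrow> L x \<le> H"
  using vars_vdepths[of x s] vdepths_le[of _ s x] unfolding layered_iff by fastforce

lemma layered_cong: "(\<forall>x\<in>vars s. L x = L' x) \<Longrightarrow> layered H S L d s = layered H S L' d s"
  by (induction s arbitrary: d) auto

lemma layered_ren: "inj \<rho> \<Longrightarrow> layered H S L d s \<Longrightarrow> layered H S (L \<circ> inv \<rho>) d (ren \<rho> s)"
  by (induction s arbitrary: d) (auto simp: ren_def)

lemma layered_subst:
  "layered H S L d s \<Longrightarrow> (\<forall>x\<in>vars s. layered H S L' (L x) (\<sigma> x)) \<Longrightarrow>
   layered H S L' d (subst \<sigma> s)"
  by (induction s arbitrary: d) auto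

lemma layered_closed: "vars s = {} \<Longrightarrow> height s \<le> H \<Longrightarrow> syms s \<subseteq> S \<Longrightarrow> layered H S L 0 s"
  unfolding layered_iff by (auto dest: vdepths_vars)

lemma layered_star: "(Star, 0) \<in> S \<Longrightarrow> d \<le> H \<Longrightarrow> layered H S L d star"
  by (simp add: star_def)

section \<open>Auxiliary unifiers: truncation, cleaning and towers\<close>

fun cut :: "nat \<Rightarrow> trm \<Rightarrow> trm" where
  "cut k (Var x) = Var x"
| "cut 0 (App f ts) = (if ts = [] then App f [] else star)"
| "cut (Suc k) (App f ts) = App f (map (cut k) ts)"

lemma height_cut: "height (cut k s) \<le> k"
  by (induction k s rule: cut.induct) (auto simp: star_def Max_le_iff)

text \<open>Truncating an instance of a layered term amounts to truncating the substituted
  terms at the remaining heights; hence truncation turns unifiers into unifiers.\<close>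
lemma cut_subst:
  "layered H S L d s \<Longrightarrow> cut (H - d) (subst \<tau> s) = subst (\<lambda>x. cut (H - L x) (\<tau> x)) s"
proof (induction s arbitrary: d)
  case (Var x) then show ?case by simp
next
  case (App f ts)
  show ?case
  proof (cases "ts = []")
    case True then show ?thesis by (cases "H - d") auto
  next
    case False
    then obtain t where "t \<in> set ts" by (cases ts) auto
    with App.prems have "Suc d \<le> H" by (cases t) auto
    then have "H - d = Suc (H - Suc d)" by simp
    then show ?thesis using App by simp
  qed
qed

lemma cut_at:
  "cut k (subst \<delta>2 s) = subst \<delta>' s \<Longrightarrow> e \<in> vdepths s z \<Longrightarrow> e \<le> k \<Longrightarrow>
   \<delta>' z = cut (k - e) (\<delta>2 z)"
proof (induction s arbitrary: k e)
  case (Var y) then show ?case by (auto split: if_splits)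
next
  case (App f ts)
  then obtain t e1 where t: "t \<in> set ts" "e1 \<in> vdepths t z" "e = Suc e1" by auto
  then obtain k1 where k: "k = Suc k1" using App.prems(3) by (cases k) auto
  have "map (cut k1) (map (subst \<delta>2) ts) = map (subst \<delta>') ts" using App.prems(1) k by simp
  then have "cut k1 (subst \<delta>2 t) = subst \<delta>' t" using t(1) by (simp add: map_eq_conv)
  from App.IH[OF t(1) this t(2)] show ?case using k t App.prems(3) by simp
qed

fun clean :: "(sym \<times> nat) set \<Rightarrow> trm \<Rightarrow> trm" where
  "clean S (Var x) = Var x"
| "clean S (App f ts) = (if (f, length ts) \<in> S then App f (map (clean S) ts) else star)"

lemma syms_clean: "syms (clean S s) \<subseteq> S \<union> {(Star, 0)}"
  by (induction S s rule: clean.induct) (auto simp: star_def)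

lemma clean_subst: "syms s \<subseteq> S \<Longrightarrow> clean S (subst \<tau> s) = subst (clean S \<circ> \<tau>) s"
  by (induction s) auto

text \<open>A unary tower of height K; its truncations have every height up to K, so they
  record the depth at which the tower was cut.\<close>
fun tower :: "nat \<Rightarrow> trm" where
  "tower 0 = star"
| "tower (Suc k) = App (Sym 0) [tower k]"

lemma height_cut_tower: "j \<le> K \<Longrightarrow> height (cut j (tower K)) = j"
proof (induction j arbitrary: K)
  case 0 then show ?case by (cases K) (auto simp: star_def)
next
  case (Suc j) then obtain K1 where "K = Suc K1" by (cases K) auto
  with Suc show ?case by simp
qed

section \<open>Most general unifiers of layered terms are layered\<close>

context
  fixes H :: nat and S :: "(sym \<times> nat) set" and L :: "nat \<Rightarrow> nat"
    and v t :: trm and \<sigma> :: "nat \<Rightarrow> trm"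
  assumes star_in: "(Star, 0) \<in> S"
    and levels_le: "\<And>x. L x \<le> H"
    and layered_v: "layered H S L 0 v" and layered_t: "layered H S L 0 t"
    and mgu: "is_mgu \<sigma> v t"
begin

lemma mgu_unifies: "subst \<sigma> v = subst \<sigma> t"
  using mgu unfolding is_mgu_def by blast

lemma mgu_factors: "subst \<tau> v = subst \<tau> t \<Longrightarrow> \<exists>\<delta>. \<forall>x. \<tau> x = subst \<delta> (\<sigma> x)"
  using mgu unfolding is_mgu_def by blast

text \<open>Truncating \<sigma> x at height H - L x gives another unifier; so \<sigma> x fits there.\<close>
lemma mgu_height: "height (\<sigma> x) + L x \<le> H"
proof -
  define \<tau> where "\<tau> = (\<lambda>x. cut (H - L x) (\<sigma> x))"
  have "subst \<tau> v = subst \<tau> t"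
    using cut_subst[OF layered_v, of \<sigma>] cut_subst[OF layered_t, of \<sigma>] mgu_unifies
    by (simp add: \<tau>_def)
  then obtain \<delta> where "\<forall>x. \<tau> x = subst \<delta> (\<sigma> x)" using mgu_factors by blast
  then have "height (\<sigma> x) \<le> height (\<tau> x)" by (rule factor_height)
  also have "\<dots> \<le> H - L x" unfolding \<tau>_def by (rule height_cut)
  finally show ?thesis using levels_le[of x] by simp
qed

text \<open>Replacing foreign symbols by star gives another unifier; so \<sigma> x uses only S.\<close>
lemma mgu_syms: "syms (\<sigma> x) \<subseteq> S"
proof -
  define \<tau> where "\<tau> = clean S \<circ> \<sigma>"
  have "syms v \<subseteq> S" "syms t \<subseteq> S" using layered_v layered_t unfolding layered_iff by auto
  then have "subst \<tau> v = subst \<tau> t"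
    using clean_subst[of v S \<sigma>] clean_subst[of t S \<sigma>] mgu_unifies by (simp add: \<tau>_def)
  then obtain \<delta> where "\<forall>x. \<tau> x = subst \<delta> (\<sigma> x)" using mgu_factors by blast
  then have "syms (\<sigma> x) \<subseteq> syms (\<tau> x)" by (rule factor_syms)
  also have "\<dots> \<subseteq> S" using syms_clean[of S "\<sigma> x"] star_in by (auto simp: \<tau>_def)
  finally show ?thesis .
qed

text \<open>Plugging a tower of height H into z and truncating gives another unifier; the
  height at which the tower gets cut reveals the absolute depth of each occurrence of z,
  so all occurrences of z in the terms \<sigma> x lie at the same absolute depth.\<close>
lemma mgu_levels:
  assumes ex: "e \<in> vdepths (\<sigma> x) z" and ey: "e' \<in> vdepths (\<sigma> y) z"
  shows "L x + e = L y + e'"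
proof -
  define \<delta>2 where "\<delta>2 = Var(z := tower H)"
  define \<tau> where "\<tau> = (\<lambda>x. cut (H - L x) (subst \<delta>2 (\<sigma> x)))"
  have "subst \<tau> v = subst \<tau> t"
    using cut_subst[OF layered_v, of "subst \<delta>2 \<circ> \<sigma>"] cut_subst[OF layered_t, of "subst \<delta>2 \<circ> \<sigma>"]
      mgu_unifies subst_comp[of \<delta>2 \<sigma> v] subst_comp[of \<delta>2 \<sigma> t]
    by (simp add: \<tau>_def)
  then obtain \<delta> where d: "\<forall>x. \<tau> x = subst \<delta> (\<sigma> x)" using mgu_factors by blast
  have ex': "e \<le> H - L x" using vdepths_le[OF ex] mgu_height[of x] by simp
  have ey': "e' \<le> H - L y" using vdepths_le[OF ey] mgu_height[of y] by simp
  have "\<delta> z = cut (H - L x - e) (tower H)"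
    using cut_at[of "H - L x" \<delta>2 "\<sigma> x" \<delta> e z] d ex ex' by (simp add: \<tau>_def \<delta>2_def)
  moreover have "\<delta> z = cut (H - L y - e') (tower H)"
    using cut_at[of "H - L y" \<delta>2 "\<sigma> y" \<delta> e' z] d ey ey' by (simp add: \<tau>_def \<delta>2_def)
  ultimately have "H - L x - e = H - L y - e'"
    using height_cut_tower[of "H - L x - e" H] height_cut_tower[of "H - L y - e'" H] by simp
  then show ?thesis using ex' ey' levels_le[of x] levels_le[of y] by simp
qed

lemma mgu_layered: "\<exists>L'. \<forall>x. layered H S L' (L x) (\<sigma> x)"
proof -
  define L' where "L' = (\<lambda>z. SOME n. \<exists>x e. e \<in> vdepths (\<sigma> x) z \<and> n = L x + e)"
  have "L' z = L x + e" if e: "e \<in> vdepths (\<sigma> x) z" for x z e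
  proof -
    have "\<exists>x1 e1. e1 \<in> vdepths (\<sigma> x1) z \<and> L' z = L x1 + e1"
      unfolding L'_def by (rule someI_ex) (use e in blast)
    then show ?thesis using mgu_levels e by metis
  qed
  then have "layered H S L' (L x) (\<sigma> x)" for x
    unfolding layered_iff using mgu_height[of x] mgu_syms[of x] by blast
  then show ?thesis by blast
qed

end

definition layered_flow :: "nat \<Rightarrow> (sym \<times> nat) set \<Rightarrow> trm \<times> trm \<Rightarrow> bool" where
  "layered_flow H S f \<longleftrightarrow> (\<exists>L. layered H S L 0 (fst f) \<and> layered H S L 0 (snd f))"

lemma layered_merge:
  assumes "layered H S L1 0 u" "layered H S L1 0 v"
    and "layered H S L2 0 t" "layered H S L2 0 w"
    and disj: "(vars t \<union> vars w) \<inter> (vars u \<union> vars v) = {}"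
  shows "\<exists>L. (\<forall>x. L x \<le> H) \<and> layered H S L 0 u \<and> layered H S L 0 v \<and>
              layered H S L 0 t \<and> layered H S L 0 w"
proof -
  define L where "L = (\<lambda>x. min H (if x \<in> vars u \<union> vars v then L1 x else L2 x))"
  have "layered H S L 0 s" if "layered H S L1 0 s" "vars s \<subseteq> vars u \<union> vars v" for s
    using that layered_var_le[OF that(1)] by (subst layered_cong[where L'=L1]) (auto simp: L_def)
  moreover have "layered H S L 0 s" if "layered H S L2 0 s" "vars s \<subseteq> vars t \<union> vars w" for s
    using that layered_var_le[OF that(1)] disj
    by (subst layered_cong[where L'=L2]) (auto simp: L_def)
  ultimately show ?thesis using assms by (intro exI[of _ L]) (auto simp: L_def)
qed

lemma wprod_layered:
  assumes S: "(Star, 0) \<in> S" and F: "\<forall>f\<in>F. layered_flow H S f"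
    and G: "\<forall>g\<in>G. layered_flow H S g" and p: "p \<in> wprod F G"
  shows "layered_flow H S p"
proof -
  from p obtain u v t w \<sigma> \<rho> t0 w0 where p_eq: "p = (subst \<sigma> u, subst \<sigma> w)"
    and uv: "(u, v) \<in> F" and tw: "(t0, w0) \<in> G" and bij: "bij \<rho>"
    and t: "t = ren \<rho> t0" and w: "w = ren \<rho> w0"
    and disj: "(vars t \<union> vars w) \<inter> (vars u \<union> vars v) = {}" and mgu: "is_mgu \<sigma> v t"
    unfolding wprod_def by blast
  from F uv obtain L1 where L1: "layered H S L1 0 u" "layered H S L1 0 v"
    unfolding layered_flow_def by fastforce
  from G tw obtain L2 where L2: "layered H S L2 0 t0" "layered H S L2 0 w0"
    unfolding layered_flow_def by fastforce
  have inj: "inj \<rho>" using bij bij_is_inj by blast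
  obtain L where L: "\<forall>x. L x \<le> H" "layered H S L 0 u" "layered H S L 0 v"
      "layered H S L 0 t" "layered H S L 0 w"
    using layered_merge[OF L1 layered_ren[OF inj L2(1)] layered_ren[OF inj L2(2)]] disj t w
    by blast
  obtain L' where "\<forall>x. layered H S L' (L x) (\<sigma> x)"
    using mgu_layered[OF S _ L(3) L(4) mgu] L(1) by blast
  then have "layered H S L' 0 (subst \<sigma> u)" "layered H S L' 0 (subst \<sigma> w)"
    using layered_subst[OF L(2)] layered_subst[OF L(5)] by auto
  then show ?thesis unfolding layered_flow_def p_eq by auto
qed

abbreviation wiring_syms :: "(trm \<times> trm) set \<Rightarrow> (sym \<times> nat) set" where
  "wiring_syms F \<equiv> wsyms F \<union> {(Star, 0)}"

text \<open>In a balanced wiring every flow is layered: the level of a variable is its unique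
  height of occurrence.\<close>
lemma balanced_flow_layered:
  assumes w: "wiring F" and b: "balanced F" and f: "f \<in> F"
  shows "layered_flow (wheight F) (wiring_syms F) f"
proof -
  let ?H = "wheight F" and ?S = "wiring_syms F"
  have "flow_height f \<le> ?H"
    unfolding wheight_def using w f by (intro Max_ge) (auto simp: wiring_def)
  then have h: "height (fst f) \<le> ?H" "height (snd f) \<le> ?H" unfolding flow_height_def by auto
  have sy: "syms (fst f) \<subseteq> ?S" "syms (snd f) \<subseteq> ?S" using f unfolding wsyms_def by auto
  have bf: "balanced_flow f" using b f unfolding balanced_def by auto
  define L where "L = (\<lambda>x. SOME e. e \<in> vdepths (fst f) x \<union> vdepths (snd f) x)"
  have L: "L x = e" if "e \<in> vdepths (fst f) x \<union> vdepths (snd f) x" for x e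
  proof -
    have "L x \<in> vdepths (fst f) x \<union> vdepths (snd f) x" unfolding L_def using that by (rule someI)
    then show ?thesis using bf that unfolding balanced_flow_def by blast
  qed
  show ?thesis unfolding layered_flow_def layered_iff using h sy L by (intro exI[of _ L]) auto
qed

lemma wpow_layered:
  assumes "wiring F" and "balanced F"
  shows "p \<in> wpow F n \<Longrightarrow> layered_flow (wheight F) (wiring_syms F) p"
proof (induction n arbitrary: p)
  case 0
  then show ?case unfolding layered_flow_def by (auto intro!: exI[of _ "\<lambda>_. 0"])
next
  case (Suc n)
  show ?case
    by (rule wprod_layered[of _ F _ "wpow F n"]) (use Suc balanced_flow_layered[OF assms] in auto)
qed

section \<open>The computation space is separating\<close>

lemma Comp_iff:
  "(s, r) \<in> Comp F \<longleftrightarrow>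
     r = star \<and> vars s = {} \<and> layered_flow (wheight F) (wiring_syms F) (s, r)"
proof
  assume "(s, r) \<in> Comp F"
  then show "r = star \<and> vars s = {} \<and> layered_flow (wheight F) (wiring_syms F) (s, r)"
    unfolding Comp_def layered_flow_def
    by (auto intro!: exI[of _ "\<lambda>_. 0"] layered_closed layered_star)
next
  assume "r = star \<and> vars s = {} \<and> layered_flow (wheight F) (wiring_syms F) (s, r)"
  then show "(s, r) \<in> Comp F" unfolding Comp_def layered_flow_def layered_iff by auto
qed

text \<open>Applying a wiring to a fact yields facts: the flow's variables all get matched.\<close>
lemma wapp_fact:
  assumes "wiring F" and "is_fact u" and "p \<in> wapp F u"
  shows "is_fact p"
proof -
  obtain s where u: "u = (s, star)" "vars s = {}" using assms(2) unfolding is_fact_def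
    by (cases u) auto
  from assms(3) obtain a v t w \<sigma> \<rho> where p: "p = (subst \<sigma> a, subst \<sigma> w)" and av: "(a, v) \<in> F"
      and t: "t = ren \<rho> s" and w: "w = ren \<rho> star" and mgu: "is_mgu \<sigma> v t"
    unfolding wapp_def wprod_def u by blast
  have "vars a \<subseteq> vars v" using assms(1) av unfolding wiring_def is_flow_def by fastforce
  moreover have "subst \<sigma> v = subst \<sigma> s" using mgu t ren_closed[OF u(2)] unfolding is_mgu_def by simp
  ultimately have "vars (subst \<sigma> a) = {}"
    using u(2) vars_subst[of \<sigma> a] vars_subst[of \<sigma> v] subst_closed[OF u(2)] by auto
  then show ?thesis unfolding is_fact_def p w by (simp add: ren_closed)
qed

lemma Comp_closed:
  assumes "wiring F" and "balanced F" and u: "u \<in> Comp F"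
  shows "wapp F u \<subseteq> Comp F"
proof
  fix p assume p: "p \<in> wapp F u"
  have "is_fact u" using u unfolding Comp_def is_fact_def by auto
  then have "is_fact p" by (rule wapp_fact[OF assms(1) _ p])
  moreover have "layered_flow (wheight F) (wiring_syms F) u"
    using u Comp_iff[of "fst u" "snd u" F] by simp
  then have "layered_flow (wheight F) (wiring_syms F) p"
    using wprod_layered[of _ F _ "{u}" p] balanced_flow_layered[OF assms(1,2)] p
    unfolding wapp_def by blast
  ultimately show "p \<in> Comp F" using Comp_iff[of "fst p" "snd p" F] unfolding is_fact_def
    by (metis prod.collapse)
qed

text \<open>A layered flow (a, b) fires on some fact of Comp(F): ground b by star.\<close>
lemma layered_flow_fires:
  assumes ab: "layered_flow (wheight F) (wiring_syms F) (a, b)"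
  shows "\<exists>u\<in>Comp F. wapp {(a, b)} u \<noteq> {}"
proof -
  let ?H = "wheight F" and ?S = "wiring_syms F"
  from ab obtain L where lb: "layered ?H ?S L 0 b" unfolding layered_flow_def by auto
  define c where "c = subst (\<lambda>_. star) b"
  have vc: "vars c = {}" unfolding c_def vars_subst by simp
  have "layered ?H ?S (\<lambda>_. 0) (L x) star" if "x \<in> vars b" for x
    using layered_var_le[OF lb that] by (intro layered_star) auto
  then have "layered ?H ?S (\<lambda>_. 0) 0 c" unfolding c_def by (intro layered_subst[OF lb]) blast
  moreover have "layered ?H ?S (\<lambda>_. 0) 0 star" by (intro layered_star) auto
  ultimately have cC: "(c, star) \<in> Comp F"
    unfolding Comp_iff layered_flow_def using vc by auto
  define \<sigma> where "\<sigma> = (\<lambda>x. if x \<in> vars b then star else Var x)"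
  have mgu: "is_mgu \<sigma> b c" unfolding \<sigma>_def c_def by (rule grounding_mgu)
  have "(subst \<sigma> a, star) \<in> wapp {(a, b)} (c, star)" using wapp_member[OF _ vc mgu] by blast
  then show ?thesis using cC by blast
qed

lemma Comp_separates:
  assumes "wiring F" and "balanced F" and none: "\<forall>u\<in>Comp F. wapp (wpow F n) u = {}"
  shows "wpow F n = {}"
proof (rule ccontr)
  assume "wpow F n \<noteq> {}"
  then obtain a b where ab: "(a, b) \<in> wpow F n" by auto
  then obtain u where "u \<in> Comp F" "wapp {(a, b)} u \<noteq> {}"
    using layered_flow_fires wpow_layered[OF assms(1,2)] by blast
  then show False using none wapp_mono[of "{(a, b)}" "wpow F n" u] ab by blast
qed

theorem mainTheorem6:
  assumes "wiring F" and "balanced F"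
  shows "separating (Comp F) F"
  unfolding separating_def
proof (intro conjI ballI allI impI)
  show "is_fact u" if "u \<in> Comp F" for u
    using that unfolding Comp_def is_fact_def by auto
  show "wapp F u \<subseteq> Comp F" if "u \<in> Comp F" for u
    using Comp_closed[OF assms that] .
  show "wpow F n = {}" if "\<forall>u\<in>Comp F. wapp (wpow F n) u = {}" for n
    using Comp_separates[OF assms that] .
qed

end
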